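(* Let $G=(V,E,\partial)$ be a graph and let $\mathcal G=\bigoplus_{v\in V}\mathcal G_v$ be a vertex space associated to $G$. Then there exist a graph $\tilde G=(\tilde V,E,\tilde\partial)$ (with the same edge set $E$) and a surjective graph morphism $\pi\colon \tilde G\to G$ which is the identity on $E$, together with subspaces $\tilde{\mathcal G}_{\tilde v}\subseteq \mathbb C^{\tilde E_{\tilde v}}$ for $\tilde v\in\tilde V$ (where $\tilde E_{\tilde v}$ is the set of edges adjacent to $\tilde v$ in $\tilde G$; such edges are adjacent to $\pi(\tilde v)$ in $G$, and $\tilde{\mathcal G}_{\tilde v}$ is regarded as a subspace of $\mathbb C^{E_{\pi(\tilde v)}}$ by extension by zero), such that $$\mathcal G=\bigoplus_{\tilde v\in\tilde V}\tilde{\mathcal G}_{\tilde v}\qquad\text{and}\qquad \mathcal G_v=\bigoplus_{\tilde v\in\pi^{-1}\{v\}}\tilde{\mathcal G}_{\tilde v}\quad\text{for all }v\in V,$$ and each $\tilde{\mathcal G}_{\tilde v}$ is irreducible.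
   Context: A graph $G=(V,E,\partial)$ consists of a countable vertex set $V$, a countable edge set $E$, and a map $\partial\colon E\to V\times V$, $e\mapsto(\partial_-e,\partial_+e)$ (initial and terminal vertex). For $v\in V$ let $E_v^\pm=\{e\in E:\partial_\pm e=v\}$ and $E_v=E_v^+\sqcup E_v^-$ (disjoint union, so a self-loop appears twice); $\deg v=|E_v|$ is assumed finite and $\ge1$. The maximal vertex space at $v$ is $\mathbb C^{E_v}$; a vertex space at $v$ is a linear subspace $\mathcal G_v\subseteq\mathbb C^{E_v}$, and a vertex space of $G$ is $\mathcal G=\bigoplus_{v\in V}\mathcal G_v$. For $E_0\subseteq E_v$ set $\mathcal G_v|_{E_0}=\{F\in\mathcal G_v: F_e=0\text{ for all }e\in E_v\setminus E_0\}$. A vertex space $\mathcal G_v$ is irreducible if for every decomposition $E_v=E_{1}\sqcup E_{2}$ with $\mathcal G_v=\mathcal G_v|_{E_1}\oplus\mathcal G_v|_{E_2}$ one has $E_1=\emptyset$ or $E_2=\emptyset$ (the same definition applies to vertices of $\tilde G$). A graph morphism $\pi\colon\tilde G\to G$ which is the identity on edges is a map $\pi\colon\tilde V\to V$ with $\partial_\pm e=\pi(\tilde\partial_\pm e)$ for all $e\in E$; it is surjective if $\pi$ is onto $V$. *)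

theory Defs
  imports Complex_Main "HOL-Library.Countable_Set"
begin

text \<open>Half-edges: a pair (e, b) with b = True standing for the terminal end
  (e in E_v^+) and b = False for the initial end (e in E_v^-).  Thus the
  disjoint union E_v = E_v^+ + E_v^- is the set of half-edges at v, and a
  self-loop contributes two half-edges.\<close>

definition endpt :: "('e \<Rightarrow> 'v \<times> 'v) \<Rightarrow> bool \<Rightarrow> 'e \<Rightarrow> 'v" where
  "endpt bd b e = (if b then snd (bd e) else fst (bd e))"

definition half_edges :: "'e set \<Rightarrow> ('e \<Rightarrow> 'v \<times> 'v) \<Rightarrow> 'v \<Rightarrow> ('e \<times> bool) set" where
  "half_edges E bd v = {(e, b). e \<in> E \<and> endpt bd b e = v}"

definition is_graph :: "'v set \<Rightarrow> 'e set \<Rightarrow> ('e \<Rightarrow> 'v \<times> 'v) \<Rightarrow> bool" where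
  "is_graph V E bd \<longleftrightarrow> countable V \<and> countable E
     \<and> (\<forall>e\<in>E. fst (bd e) \<in> V \<and> snd (bd e) \<in> V)
     \<and> (\<forall>v\<in>V. finite (half_edges E bd v) \<and> half_edges E bd v \<noteq> {})"

text \<open>C^A, realised inside the functions on all half-edges by extension by zero.\<close>
definition supported_on :: "'h set \<Rightarrow> ('h \<Rightarrow> complex) set" where
  "supported_on A = {F. \<forall>h. h \<notin> A \<longrightarrow> F h = 0}"

definition complex_subspace :: "('h \<Rightarrow> complex) set \<Rightarrow> bool" where
  "complex_subspace S \<longleftrightarrow> (\<lambda>_. 0) \<in> S
     \<and> (\<forall>F\<in>S. \<forall>G\<in>S. (\<lambda>h. F h + G h) \<in> S)
     \<and> (\<forall>c. \<forall>F\<in>S. (\<lambda>h. c * F h) \<in> S)"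

definition is_vertex_space :: "('h set) \<Rightarrow> ('h \<Rightarrow> complex) set \<Rightarrow> bool" where
  "is_vertex_space A S \<longleftrightarrow> complex_subspace S \<and> S \<subseteq> supported_on A"

definition subspace_sum :: "'i set \<Rightarrow> ('i \<Rightarrow> ('h \<Rightarrow> complex) set) \<Rightarrow> ('h \<Rightarrow> complex) set" where
  "subspace_sum I S = {x. \<exists>J f. finite J \<and> J \<subseteq> I \<and> (\<forall>i\<in>J. f i \<in> S i)
                            \<and> x = (\<lambda>h. \<Sum>i\<in>J. f i h)}"

definition is_direct_sum :: "('h \<Rightarrow> complex) set \<Rightarrow> 'i set \<Rightarrow> ('i \<Rightarrow> ('h \<Rightarrow> complex) set) \<Rightarrow> bool" where
  "is_direct_sum X I S \<longleftrightarrow> X = subspace_sum I S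
     \<and> (\<forall>J f. finite J \<and> J \<subseteq> I \<and> (\<forall>i\<in>J. f i \<in> S i) \<and> (\<lambda>h. \<Sum>i\<in>J. f i h) = (\<lambda>_. 0)
             \<longrightarrow> (\<forall>i\<in>J. f i = (\<lambda>_. 0)))"

definition restr_space :: "('h \<Rightarrow> complex) set \<Rightarrow> 'h set \<Rightarrow> ('h \<Rightarrow> complex) set" where
  "restr_space S E0 = {F\<in>S. \<forall>h. h \<notin> E0 \<longrightarrow> F h = 0}"

definition irreducible_vs :: "'h set \<Rightarrow> ('h \<Rightarrow> complex) set \<Rightarrow> bool" where
  "irreducible_vs A S \<longleftrightarrow> (\<forall>E1 E2. A = E1 \<union> E2 \<and> E1 \<inter> E2 = {}
      \<and> is_direct_sum S (UNIV :: bool set) (\<lambda>b. if b then restr_space S E1 else restr_space S E2)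
      \<longrightarrow> E1 = {} \<or> E2 = {})"

end

theory Submission
  imports Defs
begin

text \<open>Split every vertex v into the blocks of the finest partition of E_v along which
  Gv v decomposes: the block of a half-edge h is the least set of half-edges containing h
  that is stable under the coordinate projections of Gv v. Blocks at v are pairwise
  disjoint, so Gv v is the direct sum of its restrictions to the blocks, and each
  restriction is irreducible because any splitting of it would again split Gv v.
  The blocks become the vertices of the new graph; each half-edge is attached to the
  vertex given by its block.\<close>

definition proj_on :: "'h set \<Rightarrow> ('h \<Rightarrow> complex) \<Rightarrow> 'h \<Rightarrow> complex" where
  "proj_on X F = (\<lambda>k. if k \<in> X then F k else 0)"

definition splits :: "('h \<Rightarrow> complex) set \<Rightarrow> 'h set \<Rightarrow> bool" where
  "splits S X \<longleftrightarrow> (\<forall>F\<in>S. proj_on X F \<in> S)"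

lemma sum_eq_single_nonzero:
  assumes "finite J" "\<forall>j\<in>J. j \<noteq> i \<longrightarrow> g j = (0 :: 'a :: comm_monoid_add)"
  shows "sum g J = (if i \<in> J then g i else 0)"
proof -
  have "sum g J = (\<Sum>j\<in>J. if j = i then g j else 0)"
    using assms(2) by (intro sum.cong) auto
  then show ?thesis using assms(1) by simp
qed

lemma complex_subspace_zero: "complex_subspace S \<Longrightarrow> (\<lambda>_. 0) \<in> S"
  and complex_subspace_add: "complex_subspace S \<Longrightarrow> F \<in> S \<Longrightarrow> G \<in> S \<Longrightarrow> (\<lambda>h. F h + G h) \<in> S"
  and complex_subspace_scale: "complex_subspace S \<Longrightarrow> F \<in> S \<Longrightarrow> (\<lambda>h. c * F h) \<in> S"
  unfolding complex_subspace_def by blast+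

lemma complex_subspace_sum:
  assumes "complex_subspace S" "finite J" "\<forall>i\<in>J. f i \<in> S"
  shows "(\<lambda>h. \<Sum>i\<in>J. f i h) \<in> S"
  using assms(2,3)
proof (induction J rule: finite_induct)
  case empty
  then show ?case using complex_subspace_zero[OF assms(1)] by simp
next
  case (insert i J)
  then show ?case using complex_subspace_add[OF assms(1), of "f i" "\<lambda>h. \<Sum>i\<in>J. f i h"] by simp
qed

lemma complex_subspace_restr_space: "complex_subspace S \<Longrightarrow> complex_subspace (restr_space S X)"
  unfolding complex_subspace_def restr_space_def by auto

lemma is_vertex_space_restr_space: "complex_subspace S \<Longrightarrow> is_vertex_space X (restr_space S X)"
  using complex_subspace_restr_space[of S X]
  by (auto simp: is_vertex_space_def restr_space_def supported_on_def)

lemma subspace_sum_zero: "(\<lambda>_. 0) \<in> subspace_sum I S"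
  unfolding subspace_sum_def by (intro CollectI exI[of _ "{}"]) auto

lemma complex_subspace_subspace_sum:
  assumes "\<forall>i\<in>I. complex_subspace (S i)"
  shows "complex_subspace (subspace_sum I S)"
  unfolding complex_subspace_def
proof (intro conjI ballI allI subspace_sum_zero)
  fix F G assume "F \<in> subspace_sum I S" "G \<in> subspace_sum I S"
  then obtain J1 f1 J2 f2 where
    J1: "finite J1" "J1 \<subseteq> I" "\<forall>i\<in>J1. f1 i \<in> S i" "F = (\<lambda>h. \<Sum>i\<in>J1. f1 i h)" and
    J2: "finite J2" "J2 \<subseteq> I" "\<forall>i\<in>J2. f2 i \<in> S i" "G = (\<lambda>h. \<Sum>i\<in>J2. f2 i h)"
    unfolding subspace_sum_def by blast
  define g1 where "g1 i = (if i \<in> J1 then f1 i else (\<lambda>_. 0))" for i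
  define g2 where "g2 i = (if i \<in> J2 then f2 i else (\<lambda>_. 0))" for i
  have "g1 i \<in> S i" "g2 i \<in> S i" if "i \<in> I" for i
    using that J1(3) J2(3) assms complex_subspace_zero unfolding g1_def g2_def by auto
  then have "(\<lambda>h. g1 i h + g2 i h) \<in> S i" if "i \<in> J1 \<union> J2" for i
    using that J1(2) J2(2) assms complex_subspace_add by blast
  moreover have "(\<Sum>i\<in>J1 \<union> J2. g1 i h) = F h" "(\<Sum>i\<in>J1 \<union> J2. g2 i h) = G h" for h
    using J1(1) J2(1) sum.inter_restrict[of "J1 \<union> J2" "\<lambda>i. f1 i h" J1]
      sum.inter_restrict[of "J1 \<union> J2" "\<lambda>i. f2 i h" J2]
    by (simp_all add: g1_def g2_def J1(4) J2(4) if_distrib[of "\<lambda>f. f h"] Int_absorb1)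
  then have "(\<lambda>h. F h + G h) = (\<lambda>h. \<Sum>i\<in>J1 \<union> J2. g1 i h + g2 i h)"
    by (simp add: sum.distrib)
  ultimately show "(\<lambda>h. F h + G h) \<in> subspace_sum I S"
    unfolding subspace_sum_def using J1(1,2) J2(1,2)
    by (intro CollectI exI[of _ "J1 \<union> J2"] exI[of _ "\<lambda>i h. g1 i h + g2 i h"]) auto
next
  fix c F assume "F \<in> subspace_sum I S"
  then obtain J f where J: "finite J" "J \<subseteq> I" "\<forall>i\<in>J. f i \<in> S i" "F = (\<lambda>h. \<Sum>i\<in>J. f i h)"
    unfolding subspace_sum_def by blast
  have "(\<lambda>h. c * F h) = (\<lambda>h. \<Sum>i\<in>J. c * f i h)"
    by (simp add: J(4) sum_distrib_left)
  moreover have "\<forall>i\<in>J. (\<lambda>h. c * f i h) \<in> S i"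
    using J(2,3) assms complex_subspace_scale by blast
  ultimately show "(\<lambda>h. c * F h) \<in> subspace_sum I S"
    unfolding subspace_sum_def using J(1,2) by (intro CollectI exI[of _ J] exI[of _ "\<lambda>i h. c * f i h"]) auto
qed

lemma subspace_sum_mono: "I \<subseteq> I' \<Longrightarrow> subspace_sum I S \<subseteq> subspace_sum I' S"
  unfolding subspace_sum_def by blast

lemma subspace_sum_singleton: "i \<in> I \<Longrightarrow> x \<in> S i \<Longrightarrow> x \<in> subspace_sum I S"
  unfolding subspace_sum_def by (intro CollectI exI[of _ "{i}"] exI[of _ "\<lambda>_. x"]) auto

lemma subspace_sum_least:
  assumes "complex_subspace T" "\<forall>i\<in>I. S i \<subseteq> T"
  shows "subspace_sum I S \<subseteq> T"
  using assms complex_subspace_sum[OF assms(1)] unfolding subspace_sum_def by blast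

lemma subspace_sum_cong: "(\<And>i. i \<in> I \<Longrightarrow> S i = T i) \<Longrightarrow> subspace_sum I S = subspace_sum I T"
  unfolding subspace_sum_def
  by (intro Collect_cong ex_cong1 ex_cong conj_cong refl) (auto simp: subset_iff)

lemma subspace_sum_UN:
  assumes "\<forall>i\<in>I. S i = subspace_sum (K i) T" "\<forall>j\<in>(\<Union>i\<in>I. K i). complex_subspace (T j)"
  shows "subspace_sum I S = subspace_sum (\<Union>i\<in>I. K i) T"
proof
  have "\<forall>i\<in>I. complex_subspace (S i)"
    using assms by (auto intro!: complex_subspace_subspace_sum)
  then have "complex_subspace (subspace_sum I S)"
    by (rule complex_subspace_subspace_sum)
  moreover have "T j \<subseteq> subspace_sum I S" if "j \<in> (\<Union>i\<in>I. K i)" for j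
    using that assms(1) by (auto intro!: subspace_sum_singleton)
  ultimately show "subspace_sum (\<Union>i\<in>I. K i) T \<subseteq> subspace_sum I S"
    by (intro subspace_sum_least) auto
next
  show "subspace_sum I S \<subseteq> subspace_sum (\<Union>i\<in>I. K i) T"
    using assms
    by (intro subspace_sum_least complex_subspace_subspace_sum)
      (auto intro: subspace_sum_mono[THEN subsetD, rotated])
qed

lemma is_direct_sum_disjoint_supports:
  assumes "X = subspace_sum I S" "\<forall>i\<in>I. S i \<subseteq> supported_on (B i)"
    and "\<forall>i\<in>I. \<forall>j\<in>I. i \<noteq> j \<longrightarrow> B i \<inter> B j = {}"
  shows "is_direct_sum X I S"
  unfolding is_direct_sum_def
proof (intro conjI assms(1) allI impI ballI ext)
  fix J f i k
  assume J: "finite J \<and> J \<subseteq> I \<and> (\<forall>i\<in>J. f i \<in> S i) \<and> (\<lambda>h. \<Sum>i\<in>J. f i h) = (\<lambda>_. 0)"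
    and i: "i \<in> J"
  have "f j k = 0" if "j \<in> J" "j \<noteq> i" "k \<in> B i" for j
    using that i J assms(2,3) unfolding supported_on_def by blast
  moreover have "f i k = 0" if "k \<notin> B i"
    using that i J assms(2) unfolding supported_on_def by blast
  moreover have "(\<Sum>j\<in>J. f j k) = 0"
    using J by (simp add: fun_eq_iff)
  ultimately show "f i k = 0"
    using sum_eq_single_nonzero[of J i "\<lambda>j. f j k"] J i by (cases "k \<in> B i") auto
qed

lemma proj_on_proj_on: "proj_on X (proj_on Y F) = proj_on (X \<inter> Y) F"
  unfolding proj_on_def by auto

lemma splits_Int: "splits S X \<Longrightarrow> splits S Y \<Longrightarrow> splits S (X \<inter> Y)"
  unfolding splits_def by (metis proj_on_proj_on)

lemma splits_Inter: "finite XX \<Longrightarrow> XX \<noteq> {} \<Longrightarrow> \<forall>X\<in>XX. splits S X \<Longrightarrow> splits S (\<Inter>XX)"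
  by (induction XX rule: finite_ne_induct) (auto intro: splits_Int)

lemma splits_supported_on: "S \<subseteq> supported_on A \<Longrightarrow> splits S A"
proof -
  assume "S \<subseteq> supported_on A"
  then have "proj_on A F = F" if "F \<in> S" for F
    using that unfolding proj_on_def supported_on_def by (auto simp: fun_eq_iff)
  then show "splits S A" unfolding splits_def by simp
qed

lemma splits_Diff:
  assumes "is_vertex_space A S" "splits S X"
  shows "splits S (A - X)"
  unfolding splits_def
proof
  fix F assume F: "F \<in> S"
  have "proj_on (A - X) F = (\<lambda>k. F k + (-1) * proj_on X F k)"
    using F assms(1) unfolding is_vertex_space_def supported_on_def proj_on_def
    by (auto simp: fun_eq_iff)
  also have "\<dots> \<in> S"
    using F assms unfolding is_vertex_space_def splits_def
    by (intro complex_subspace_add complex_subspace_scale) auto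
  finally show "proj_on (A - X) F \<in> S" .
qed

lemma splits_restr_space:
  assumes "splits S X" "splits (restr_space S X) Y"
  shows "splits S (X \<inter> Y)"
  unfolding splits_def
proof
  fix F assume "F \<in> S"
  then have "proj_on X F \<in> restr_space S X"
    using assms(1) by (simp add: splits_def restr_space_def proj_on_def)
  then have "proj_on Y (proj_on X F) \<in> S"
    using assms(2) by (simp add: splits_def restr_space_def)
  then show "proj_on (X \<inter> Y) F \<in> S"
    by (simp add: proj_on_proj_on Int_commute)
qed

lemma splits_if_sum_of_restr_spaces:
  assumes "complex_subspace S"
    and "S \<subseteq> subspace_sum UNIV (\<lambda>b. if b then restr_space S E1 else restr_space S E2)"
    and "E1 \<inter> E2 = {}"
  shows "splits S E1"
  unfolding splits_def
proof
  fix F assume "F \<in> S"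
  then obtain J f where J: "finite J" "\<forall>i\<in>J. f i \<in> (if i then restr_space S E1 else restr_space S E2)"
    "F = (\<lambda>h. \<Sum>i\<in>J. f i h)"
    using assms(2) unfolding subspace_sum_def by blast
  have f_True: "f True \<in> restr_space S E1" if "True \<in> J"
    using that J(2) by fastforce
  have f_False: "f False \<in> restr_space S E2" if "False \<in> J"
    using that J(2) by fastforce
  have "proj_on E1 F k = (if True \<in> J then f True k else 0)" for k
  proof (cases "k \<in> E1")
    case True
    then have "\<forall>i\<in>J. i \<noteq> True \<longrightarrow> f i k = 0"
      using f_False assms(3) by (auto simp: restr_space_def disjoint_iff)
    then show ?thesis
      using sum_eq_single_nonzero[OF J(1), of True "\<lambda>i. f i k"] J(3) True
      by (simp add: proj_on_def)
  next
    case False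
    then show ?thesis
      using f_True unfolding restr_space_def proj_on_def by auto
  qed
  then have "proj_on E1 F = (if True \<in> J then f True else (\<lambda>_. 0))"
    by (simp add: fun_eq_iff)
  then show "proj_on E1 F \<in> S"
    using f_True complex_subspace_zero[OF assms(1)] by (simp add: restr_space_def)
qed

lemma subspace_sum_restr_spaces:
  assumes "is_vertex_space (\<Union>i\<in>I. B i) S" "finite I"
    and "\<forall>i\<in>I. \<forall>j\<in>I. i \<noteq> j \<longrightarrow> B i \<inter> B j = {}" "\<forall>i\<in>I. splits S (B i)"
  shows "S = subspace_sum I (\<lambda>i. restr_space S (B i))"
proof
  show "subspace_sum I (\<lambda>i. restr_space S (B i)) \<subseteq> S"
    using assms(1) unfolding is_vertex_space_def
    by (intro subspace_sum_least) (auto simp: restr_space_def)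
  show "S \<subseteq> subspace_sum I (\<lambda>i. restr_space S (B i))"
  proof
    fix F assume F: "F \<in> S"
    have "F k = (\<Sum>i\<in>I. proj_on (B i) F k)" for k
    proof (cases "\<exists>i\<in>I. k \<in> B i")
      case True
      then obtain i where i: "i \<in> I" "k \<in> B i" by blast
      then have "\<forall>j\<in>I. j \<noteq> i \<longrightarrow> proj_on (B j) F k = 0"
        using assms(3) by (auto simp: proj_on_def)
      then show ?thesis
        using sum_eq_single_nonzero[OF assms(2), of i "\<lambda>j. proj_on (B j) F k"] i
        by (simp add: proj_on_def)
    next
      case False
      then show ?thesis
        using F assms(1) by (auto simp: proj_on_def is_vertex_space_def supported_on_def)
    qed
    moreover have "proj_on (B i) F \<in> restr_space S (B i)" if "i \<in> I" for i
      using that F assms(4) by (auto simp: splits_def restr_space_def proj_on_def)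
    ultimately show "F \<in> subspace_sum I (\<lambda>i. restr_space S (B i))"
      unfolding subspace_sum_def using assms(2)
      by (intro CollectI exI[of _ I] exI[of _ "\<lambda>i. proj_on (B i) F"]) auto
  qed
qed

definition split_block :: "('h \<Rightarrow> complex) set \<Rightarrow> 'h set \<Rightarrow> 'h \<Rightarrow> 'h set" where
  "split_block S A h = \<Inter>{X. X \<subseteq> A \<and> splits S X \<and> h \<in> X}"

lemma split_block_least: "X \<subseteq> A \<Longrightarrow> splits S X \<Longrightarrow> h \<in> X \<Longrightarrow> split_block S A h \<subseteq> X"
  unfolding split_block_def by blast

lemma split_block_mem: "h \<in> split_block S A h"
  unfolding split_block_def by blast

lemma split_block_subset: "is_vertex_space A S \<Longrightarrow> h \<in> A \<Longrightarrow> split_block S A h \<subseteq> A"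
  by (rule split_block_least) (simp_all add: is_vertex_space_def splits_supported_on)

lemma splits_split_block:
  assumes "is_vertex_space A S" "finite A" "h \<in> A"
  shows "splits S (split_block S A h)"
proof -
  let ?XX = "{X. X \<subseteq> A \<and> splits S X \<and> h \<in> X}"
  have "?XX \<subseteq> Pow A"
    by blast
  then have "finite ?XX"
    using assms(2) finite_subset by blast
  moreover have "A \<in> ?XX"
    using assms(1,3) by (simp add: is_vertex_space_def splits_supported_on)
  ultimately show ?thesis
    unfolding split_block_def by (intro splits_Inter) auto
qed

text \<open>The blocks partition A: if h' lies in the block of h but h did not lie in the
  block of h', the complement of the latter would be a smaller splitting set around h.\<close>

lemma split_block_eq:
  assumes "is_vertex_space A S" "finite A" "h \<in> A" "h' \<in> split_block S A h"
  shows "split_block S A h' = split_block S A h"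
proof
  let ?B = "split_block S A h" and ?B' = "split_block S A h'"
  have B: "?B \<subseteq> A" "splits S ?B"
    using split_block_subset[OF assms(1,3)] splits_split_block[OF assms(1,2,3)] by auto
  have h': "h' \<in> A"
    using B(1) assms(4) by blast
  have B': "?B' \<subseteq> A" "splits S ?B'"
    using split_block_subset[OF assms(1) h'] splits_split_block[OF assms(1,2) h'] by auto
  show "?B' \<subseteq> ?B"
    using B assms(4) by (rule split_block_least)
  have "h \<in> ?B'"
  proof (rule ccontr)
    assume "h \<notin> ?B'"
    have "splits S (A - ?B')"
      using assms(1) B'(2) by (rule splits_Diff)
    moreover have "h \<in> A - ?B'"
      using assms(3) \<open>h \<notin> ?B'\<close> by blast
    ultimately have "?B \<subseteq> A - ?B'"
      by (rule split_block_least[OF Diff_subset])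
    then show False
      using assms(4) split_block_mem[of h' S A] by blast
  qed
  with B' show "?B \<subseteq> ?B'"
    by (rule split_block_least)
qed

lemma irreducible_vs_if_least_splitting:
  assumes "is_vertex_space A S" "h \<in> A"
    and least: "\<And>X. X \<subseteq> A \<Longrightarrow> splits S X \<Longrightarrow> h \<in> X \<Longrightarrow> A \<subseteq> X"
  shows "irreducible_vs A S"
  unfolding irreducible_vs_def
proof (intro allI impI)
  fix E1 E2
  assume "A = E1 \<union> E2 \<and> E1 \<inter> E2 = {} \<and>
    is_direct_sum S UNIV (\<lambda>b. if b then restr_space S E1 else restr_space S E2)"
  then have A: "A = E1 \<union> E2" and disj: "E1 \<inter> E2 = {}"
    and ds: "is_direct_sum S UNIV (\<lambda>b. if b then restr_space S E1 else restr_space S E2)"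
    by blast+
  from ds have "S = subspace_sum UNIV (\<lambda>b. if b then restr_space S E1 else restr_space S E2)"
    unfolding is_direct_sum_def by (rule conjunct1)
  then have sum: "S \<subseteq> subspace_sum UNIV (\<lambda>b. if b then restr_space S E1 else restr_space S E2)"
    by (rule equalityD1)
  have "splits S E1"
    using assms(1) sum disj by (intro splits_if_sum_of_restr_spaces) (auto simp: is_vertex_space_def)
  moreover have "A - E1 = E2"
    using A disj by blast
  ultimately have "splits S E2"
    using splits_Diff[OF assms(1), of E1] by simp
  show "E1 = {} \<or> E2 = {}"
  proof (cases "h \<in> E1")
    case True
    then have "A \<subseteq> E1"
      using least \<open>splits S E1\<close> A by blast
    then show ?thesis
      using A disj by blast
  next
    case False
    then have "A \<subseteq> E2"
      using least \<open>splits S E2\<close> A assms(2) by blast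
    then show ?thesis
      using A disj by blast
  qed
qed

lemma irreducible_vs_split_block:
  assumes "is_vertex_space A S" "finite A" "h \<in> A"
  shows "irreducible_vs (split_block S A h) (restr_space S (split_block S A h))"
proof (rule irreducible_vs_if_least_splitting)
  have "complex_subspace S"
    using assms(1) by (simp add: is_vertex_space_def)
  then show "is_vertex_space (split_block S A h) (restr_space S (split_block S A h))"
    by (rule is_vertex_space_restr_space)
  show "h \<in> split_block S A h"
    by (rule split_block_mem)
  fix X assume X: "X \<subseteq> split_block S A h" "splits (restr_space S (split_block S A h)) X" "h \<in> X"
  have "splits S (split_block S A h \<inter> X)"
    using splits_split_block[OF assms] X(2) by (rule splits_restr_space)
  then have "splits S X"
    using X(1) by (simp add: Int_absorb1)
  moreover have "X \<subseteq> A"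
    using X(1) split_block_subset[OF assms(1,3)] by blast
  ultimately show "split_block S A h \<subseteq> X"
    using X(3) by (intro split_block_least)
qed

text \<open>A half-edge of the new graph ends at the number of its block in an enumeration
  of the countable set of all blocks.\<close>

locale graph_vertex_space =
  fixes V :: "'v set" and E :: "'e set" and bd :: "'e \<Rightarrow> 'v \<times> 'v"
    and Gv :: "'v \<Rightarrow> ('e \<times> bool \<Rightarrow> complex) set"
  assumes graph: "is_graph V E bd"
    and vertex_space: "\<forall>v\<in>V. is_vertex_space (half_edges E bd v) (Gv v)"
begin

definition all_half_edges :: "('e \<times> bool) set" where
  "all_half_edges = E \<times> UNIV"

definition vertex_of :: "'e \<times> bool \<Rightarrow> 'v" where
  "vertex_of h = endpt bd (snd h) (fst h)"

definition block :: "'e \<times> bool \<Rightarrow> ('e \<times> bool) set" where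
  "block h = split_block (Gv (vertex_of h)) (half_edges E bd (vertex_of h)) h"

definition node :: "'e \<times> bool \<Rightarrow> nat" where
  "node h = to_nat_on (block ` all_half_edges) (block h)"

definition split_bd :: "'e \<Rightarrow> nat \<times> nat" where
  "split_bd e = (node (e, False), node (e, True))"

definition split_V :: "nat set" where
  "split_V = node ` all_half_edges"

definition split_map :: "nat \<Rightarrow> 'v" where
  "split_map w = vertex_of (SOME h. h \<in> all_half_edges \<and> node h = w)"

definition split_space :: "nat \<Rightarrow> ('e \<times> bool \<Rightarrow> complex) set" where
  "split_space w = restr_space (Gv (split_map w)) (half_edges E split_bd w)"

lemma half_edges_eq: "half_edges E bd v = {h \<in> all_half_edges. vertex_of h = v}"
  unfolding half_edges_def all_half_edges_def vertex_of_def by auto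

lemma endpt_split_bd: "endpt split_bd b e = node (e, b)"
  by (cases b) (simp_all add: endpt_def split_bd_def)

lemma half_edges_split_bd: "half_edges E split_bd w = {h \<in> all_half_edges. node h = w}"
  unfolding half_edges_def all_half_edges_def endpt_split_bd by auto

lemma vertex_of_in_V: "h \<in> all_half_edges \<Longrightarrow> vertex_of h \<in> V"
  using graph unfolding is_graph_def all_half_edges_def vertex_of_def endpt_def by auto

lemma finite_half_edges: "v \<in> V \<Longrightarrow> finite (half_edges E bd v)"
  using graph unfolding is_graph_def by blast

lemma mem_half_edges_vertex_of: "h \<in> all_half_edges \<Longrightarrow> h \<in> half_edges E bd (vertex_of h)"
  by (simp add: half_edges_eq)

lemma vertex_space_at:
  "h \<in> all_half_edges \<Longrightarrow> is_vertex_space (half_edges E bd (vertex_of h)) (Gv (vertex_of h))"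
  using vertex_space vertex_of_in_V by blast

lemma finite_half_edges_at: "h \<in> all_half_edges \<Longrightarrow> finite (half_edges E bd (vertex_of h))"
  using finite_half_edges vertex_of_in_V by blast

lemma block_mem: "h \<in> block h"
  unfolding block_def by (rule split_block_mem)

lemma block_subset: "h \<in> all_half_edges \<Longrightarrow> block h \<subseteq> half_edges E bd (vertex_of h)"
  unfolding block_def by (intro split_block_subset vertex_space_at mem_half_edges_vertex_of)

lemma splits_block: "h \<in> all_half_edges \<Longrightarrow> splits (Gv (vertex_of h)) (block h)"
  unfolding block_def
  by (intro splits_split_block vertex_space_at finite_half_edges_at mem_half_edges_vertex_of)

lemma block_eq_iff:
  assumes "h \<in> all_half_edges" "h' \<in> all_half_edges"
  shows "block h' = block h \<longleftrightarrow> h' \<in> block h"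
proof
  assume "block h' = block h"
  then show "h' \<in> block h"
    using block_mem[of h'] by simp
next
  assume h': "h' \<in> block h"
  then have "vertex_of h' = vertex_of h"
    using block_subset[OF assms(1)] by (auto simp: half_edges_eq)
  moreover have "split_block (Gv (vertex_of h)) (half_edges E bd (vertex_of h)) h' = block h"
    using h' unfolding block_def
    by (intro split_block_eq vertex_space_at finite_half_edges_at mem_half_edges_vertex_of assms(1))
  ultimately show "block h' = block h"
    by (simp add: block_def)
qed

lemma node_eq_iff:
  "h \<in> all_half_edges \<Longrightarrow> h' \<in> all_half_edges \<Longrightarrow> node h' = node h \<longleftrightarrow> h' \<in> block h"
proof -
  assume h: "h \<in> all_half_edges" "h' \<in> all_half_edges"
  have "countable (block ` all_half_edges)"
    using graph unfolding is_graph_def all_half_edges_def by auto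
  then have "node h' = node h \<longleftrightarrow> block h' = block h"
    unfolding node_def using h by (auto dest: inj_onD[OF inj_on_to_nat_on])
  with block_eq_iff[OF h] show ?thesis by simp
qed

lemma half_edges_node:
  assumes "h \<in> all_half_edges"
  shows "half_edges E split_bd (node h) = block h"
proof -
  have "block h \<subseteq> all_half_edges"
    using block_subset[OF assms] by (auto simp: half_edges_eq)
  then show ?thesis
    using node_eq_iff[OF assms] by (auto simp: half_edges_split_bd)
qed

lemma split_map_node: "h \<in> all_half_edges \<Longrightarrow> split_map (node h) = vertex_of h"
proof -
  assume h: "h \<in> all_half_edges"
  define h' where "h' = (SOME h'. h' \<in> all_half_edges \<and> node h' = node h)"
  have "h' \<in> all_half_edges \<and> node h' = node h"
    unfolding h'_def by (rule someI[of _ h]) (simp add: h)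
  then have "h' \<in> block h"
    using node_eq_iff h by blast
  then have "vertex_of h' = vertex_of h"
    using block_subset[OF h] by (auto simp: half_edges_eq)
  then show ?thesis
    by (simp add: split_map_def h'_def)
qed

lemma split_space_node: "h \<in> all_half_edges \<Longrightarrow> split_space (node h) = restr_space (Gv (vertex_of h)) (block h)"
  by (simp add: split_space_def split_map_node half_edges_node)

lemma fiber_split_map: "{w \<in> split_V. split_map w = v} = node ` half_edges E bd v"
  by (auto simp: split_V_def half_edges_eq split_map_node)

lemma is_graph_split: "is_graph split_V E split_bd"
  unfolding is_graph_def
proof (intro conjI ballI)
  show "countable split_V" "countable E"
    using graph by (auto simp: is_graph_def)
  show "fst (split_bd e) \<in> split_V" "snd (split_bd e) \<in> split_V" if "e \<in> E" for e
    using that by (auto simp: split_bd_def split_V_def all_half_edges_def)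
  fix w assume "w \<in> split_V"
  then obtain h where h: "h \<in> all_half_edges" "w = node h"
    unfolding split_V_def by blast
  then have "half_edges E split_bd w = block h"
    by (simp add: half_edges_node)
  then show "finite (half_edges E split_bd w)" "half_edges E split_bd w \<noteq> {}"
    using finite_subset[OF block_subset finite_half_edges_at] h(1) block_mem[of h] by auto
qed

lemma bd_split_map: "e \<in> E \<Longrightarrow> bd e = (split_map (fst (split_bd e)), split_map (snd (split_bd e)))"
  by (simp add: split_bd_def split_map_node all_half_edges_def vertex_of_def endpt_def)

lemma split_map_image: "split_map ` split_V = V"
proof -
  have "V \<subseteq> vertex_of ` all_half_edges"
  proof
    fix v assume "v \<in> V"
    then obtain h where "h \<in> half_edges E bd v"
      using graph unfolding is_graph_def by blast
    then show "v \<in> vertex_of ` all_half_edges"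
      by (auto simp: half_edges_eq)
  qed
  then show ?thesis
    using vertex_of_in_V by (auto simp: split_V_def split_map_node image_comp)
qed

lemma is_vertex_space_split_space:
  "w \<in> split_V \<Longrightarrow> is_vertex_space (half_edges E split_bd w) (split_space w)"
  unfolding split_V_def split_space_def using vertex_space vertex_of_in_V
  by (intro is_vertex_space_restr_space) (auto simp: is_vertex_space_def split_map_node)

lemma is_direct_sum_split_space: "X = subspace_sum W split_space \<Longrightarrow> is_direct_sum X W split_space"
  by (rule is_direct_sum_disjoint_supports[where B = "half_edges E split_bd"])
    (auto simp: split_space_def restr_space_def supported_on_def half_edges_split_bd)

lemma Gv_eq_subspace_sum:
  assumes v: "v \<in> V"
  shows "Gv v = subspace_sum {w \<in> split_V. split_map w = v} split_space"
proof -
  let ?W = "node ` half_edges E bd v"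
  have node_block: "half_edges E split_bd (node h) = block h" "block h \<subseteq> half_edges E bd v"
    if "h \<in> half_edges E bd v" for h
  proof -
    have "h \<in> all_half_edges" "vertex_of h = v"
      using that by (simp_all add: half_edges_eq)
    then show "half_edges E split_bd (node h) = block h" "block h \<subseteq> half_edges E bd v"
      using half_edges_node block_subset by blast+
  qed
  have "(\<Union>w\<in>?W. half_edges E split_bd w) = (\<Union>h\<in>half_edges E bd v. block h)"
    using node_block(1) by simp
  also have "\<dots> = half_edges E bd v"
  proof
    show "(\<Union>h\<in>half_edges E bd v. block h) \<subseteq> half_edges E bd v"
      using node_block(2) by (rule UN_least)
    show "half_edges E bd v \<subseteq> (\<Union>h\<in>half_edges E bd v. block h)"
      by (auto intro: block_mem)
  qed
  finally have "is_vertex_space (\<Union>w\<in>?W. half_edges E split_bd w) (Gv v)"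
    using vertex_space v by simp
  moreover have "finite ?W"
    using finite_half_edges[OF v] by simp
  moreover have "splits (Gv v) (half_edges E split_bd w)" if "w \<in> ?W" for w
    using that half_edges_node splits_block by (auto simp: half_edges_eq)
  ultimately have "Gv v = subspace_sum ?W (\<lambda>w. restr_space (Gv v) (half_edges E split_bd w))"
    by (intro subspace_sum_restr_spaces) (auto simp: half_edges_split_bd)
  also have "\<dots> = subspace_sum ?W split_space"
    by (intro subspace_sum_cong) (auto simp: split_space_def half_edges_eq split_map_node)
  finally show ?thesis
    by (simp add: fiber_split_map)
qed

lemma subspace_sum_Gv: "subspace_sum V Gv = subspace_sum split_V split_space"
proof -
  have "(\<Union>v\<in>V. {w \<in> split_V. split_map w = v}) = split_V"
    using split_map_image by blast
  moreover have "complex_subspace (split_space w)" if "w \<in> split_V" for w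
    using is_vertex_space_split_space[OF that] by (simp add: is_vertex_space_def)
  ultimately show ?thesis
    using Gv_eq_subspace_sum subspace_sum_UN[of V Gv "\<lambda>v. {w \<in> split_V. split_map w = v}"]
    by simp
qed

lemma irreducible_split_space:
  assumes "w \<in> split_V"
  shows "irreducible_vs (half_edges E split_bd w) (split_space w)"
proof -
  obtain h where h: "h \<in> all_half_edges" "w = node h"
    using assms unfolding split_V_def by blast
  show ?thesis
    unfolding h(2) split_space_node[OF h(1)] half_edges_node[OF h(1)] block_def
    by (intro irreducible_vs_split_block vertex_space_at finite_half_edges_at
        mem_half_edges_vertex_of h(1))
qed

end

theorem lemma2p5:
  fixes V :: "'v set" and E :: "'e set" and bd :: "'e \<Rightarrow> 'v \<times> 'v"
    and Gv :: "'v \<Rightarrow> ('e \<times> bool \<Rightarrow> complex) set"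
  assumes "is_graph V E bd"
    and "\<forall>v\<in>V. is_vertex_space (half_edges E bd v) (Gv v)"
  shows "\<exists>(Vt :: nat set) (bdt :: 'e \<Rightarrow> nat \<times> nat) (\<pi> :: nat \<Rightarrow> 'v)
            (Gt :: nat \<Rightarrow> ('e \<times> bool \<Rightarrow> complex) set).
           is_graph Vt E bdt
         \<and> (\<forall>e\<in>E. bd e = (\<pi> (fst (bdt e)), \<pi> (snd (bdt e))))
         \<and> \<pi> ` Vt = V
         \<and> (\<forall>w\<in>Vt. is_vertex_space (half_edges E bdt w) (Gt w))
         \<and> is_direct_sum (subspace_sum V Gv) Vt Gt
         \<and> (\<forall>v\<in>V. is_direct_sum (Gv v) {w\<in>Vt. \<pi> w = v} Gt)
         \<and> (\<forall>w\<in>Vt. irreducible_vs (half_edges E bdt w) (Gt w))"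
proof -
  interpret graph_vertex_space V E bd Gv
    using assms by unfold_locales
  have "is_direct_sum (Gv v) {w \<in> split_V. split_map w = v} split_space" if "v \<in> V" for v
    using Gv_eq_subspace_sum[OF that] by (rule is_direct_sum_split_space)
  then show ?thesis
    using is_graph_split bd_split_map split_map_image is_vertex_space_split_space
      is_direct_sum_split_space[OF subspace_sum_Gv] irreducible_split_space
    by (intro exI[of _ split_V] exI[of _ split_bd] exI[of _ split_map] exI[of _ split_space]
        conjI ballI) simp_all
qed

end
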